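(* Let $d_{in}, d_{out}, d_{\rm key}, k, m$ be positive integers, let $\mathbf W_q, \mathbf W_{\rm key} \in \mathbb R^{d_{in}\times d_{\rm key}}$ and $\mathbf W_v \in \mathbb R^{d_{in}\times d_{out}}$, and let $\sigma_q, \sigma_{\rm key}, \sigma_v$ denote the largest singular values of $\mathbf W_q, \mathbf W_{\rm key}, \mathbf W_v$ respectively. Let $\mathbf X_0 \in \mathbb R^{m\times d_{in}}$ (imposed state) with rows $(\mathbf X_0)^1,\dots,(\mathbf X_0)^m$, let $M_x := \max_j \|(\mathbf X_0)^j\|$, let $M_u>0$, and let $\mathbf Y^* \in \mathbb R^{m\times d_{out}}$ (desired output) with rows $\mathbf Y^{*1},\dots,\mathbf Y^{*m}$. Define $$\alpha := \frac{\sigma_q\sigma_{\rm key}M_uM_x}{\sqrt{d_{\rm key}}},\qquad g_i := \sum_{j=1}^m \exp\!\Big(\frac{(\mathbf X_0)^i\mathbf W_q\mathbf W_{\rm key}^\top (\mathbf X_0)^{j\top}}{\sqrt{d_{\rm key}}}\Big),\qquad \gamma_i := \frac{e^{\alpha}}{g_i}\,\sigma_v M_u .$$ Let $\mathbf Y_x^{\max} := \Xi(\mathbf X_0;\boldsymbol\theta)\in\mathbb R^{m\times d_{out}}$, and for each $i$ let $\mathbf Y^{\max,i}_{x,\perp}$ denote the orthogonal projection of the $i$-th row of $\mathbf Y_x^{\max}$ onto the orthogonal complement (in $\mathbb R^{d_{out}}$) of $\operatorname{span}(\mathbf Y^{*i})$. Suppose that for some $i\in\{1,\dots,m\}$, $$\|\mathbf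 Y^{\max,i}_{x,\perp}\| > k\,\gamma_i .$$ Then for every control input $\mathbf U\in\mathbb R^{k\times d_{in}}$ whose rows satisfy $\|\mathbf U^j\|\le M_u$ for all $j=1,\dots,k$, the output $\mathbf Y$ (the last $m$ rows of $\Xi([\mathbf U;\mathbf X_0];\boldsymbol\theta)$) satisfies $\mathbf Y\neq \mathbf Y^*$; i.e., $\mathbf Y^*$ is unreachable with $k$ control tokens of norm at most $M_u$.
   Context: Self-attention with parameters $\boldsymbol\theta=(\mathbf W_q,\mathbf W_{\rm key},\mathbf W_v)$ is the map $\Xi(\cdot;\boldsymbol\theta):\mathbb R^{N\times d_{in}}\to\mathbb R^{N\times d_{out}}$ (for any $N$) given by $\Xi(\mathbf X;\boldsymbol\theta)=\mathbf D^{-1}\exp\!\big(\mathbf Q\mathbf K^\top/\sqrt{d_{\rm key}}\big)\mathbf V$, where $\mathbf Q=\mathbf X\mathbf W_q$, $\mathbf K=\mathbf X\mathbf W_{\rm key}$, $\mathbf V=\mathbf X\mathbf W_v$, $\exp$ is applied entrywise, and $\mathbf D=\operatorname{diag}\big(\exp(\mathbf Q\mathbf K^\top/\sqrt{d_{\rm key}})\mathbf 1_{N\times1}\big)$ (i.e., row-wise softmax attention, no masking). For $\mathbf U\in\mathbb R^{k\times d_{in}}$ and $\mathbf X_0\in\mathbb R^{m\times d_{in}}$, $[\mathbf U;\mathbf X_0]\in\mathbb R^{(k+m)\times d_{in}}$ denotes vertical concatenation (rows of $\mathbf U$ first), and the output $\Xi([\mathbf U;\mathbf X_0];\boldsymbol\theta)$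 is partitioned as $[\mathbf U';\mathbf Y]$ with $\mathbf U'\in\mathbb R^{k\times d_{out}}$, $\mathbf Y\in\mathbb R^{m\times d_{out}}$. Rows of matrices are indexed by superscripts; norms of rows are Euclidean. *)

theory Defs
  imports "HOL-Analysis.Analysis"
begin

text \<open>Matrices of varying size are represented as functions nat \<Rightarrow> nat \<Rightarrow> real;
  entry (r,c) is A r c, indices start at 0, dimensions are carried explicitly
  and only entries with in-range indices are ever used.\<close>

type_synonym rmat = "nat \<Rightarrow> nat \<Rightarrow> real"

definition matmul :: "nat \<Rightarrow> rmat \<Rightarrow> rmat \<Rightarrow> rmat" where
  "matmul n A B = (\<lambda>i j. \<Sum>l<n. A i l * B l j)"

definition mtrans :: "rmat \<Rightarrow> rmat" where
  "mtrans A = (\<lambda>i j. A j i)"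

definition rownorm :: "nat \<Rightarrow> rmat \<Rightarrow> nat \<Rightarrow> real" where
  "rownorm n A i = sqrt (\<Sum>j<n. (A i j)\<^sup>2)"

definition sigma_max :: "nat \<Rightarrow> nat \<Rightarrow> rmat \<Rightarrow> real" where
  "sigma_max r c W = sqrt (Max {ev. \<exists>v::nat \<Rightarrow> real. (\<exists>j<c. v j \<noteq> 0) \<and>
      (\<forall>j<c. (\<Sum>l<c. matmul r (mtrans W) W j l * v l) = ev * v j)})"

text \<open>Self-attention \<Xi>(X; Wq, Wkey, Wv) for X an (N x din) matrix,
  Wq, Wkey : din x dkey, Wv : din x dout. Row-wise softmax, no masking.\<close>
definition attn_scores :: "nat \<Rightarrow> nat \<Rightarrow> rmat \<Rightarrow> rmat \<Rightarrow> rmat \<Rightarrow> rmat" where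
  "attn_scores din dkey Wq Wkey X =
     (\<lambda>i l. matmul dkey (matmul din X Wq) (mtrans (matmul din X Wkey)) i l / sqrt (real dkey))"

definition self_attention ::
  "nat \<Rightarrow> nat \<Rightarrow> nat \<Rightarrow> rmat \<Rightarrow> rmat \<Rightarrow> rmat \<Rightarrow> rmat \<Rightarrow> rmat" where
  "self_attention N din dkey Wq Wkey Wv X =
     (\<lambda>i j. (\<Sum>l<N. exp (attn_scores din dkey Wq Wkey X i l) * matmul din X Wv l j)
           / (\<Sum>l<N. exp (attn_scores din dkey Wq Wkey X i l)))"

definition vconcat :: "nat \<Rightarrow> rmat \<Rightarrow> rmat \<Rightarrow> rmat" where
  "vconcat k U X0 = (\<lambda>r c. if r < k then U r c else X0 (r - k) c)"

definition proj_perp_row :: "nat \<Rightarrow> rmat \<Rightarrow> rmat \<Rightarrow> nat \<Rightarrow> nat \<Rightarrow> real" where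
  "proj_perp_row n Y Ys i =
     (let yy = (\<Sum>j<n. (Ys i j)\<^sup>2); vy = (\<Sum>j<n. Y i j * Ys i j) in
      (\<lambda>c. if yy = 0 then Y i c else Y i c - (vy / yy) * Ys i c))"

definition vnorm :: "nat \<Rightarrow> (nat \<Rightarrow> real) \<Rightarrow> real" where
  "vnorm n v = sqrt (\<Sum>j<n. (v j)\<^sup>2)"

end

theory Submission
  imports Defs "Jordan_Normal_Form.Char_Poly"
begin

text \<open>Suppose row k + i of the output on [U; X0] equals row i of Y*. With e_l the
  attention weights of the k control tokens, S = \<Sum> e_l, A = \<Sum> e_l V_l and g_i as in the
  statement, that row is (A + g_i Ymax_i) / (S + g_i). Hence Ymax_i is a multiple of Y*_i
  minus A / g_i, and its component orthogonal to Y*_i has norm at most \<parallel>A\<parallel> / g_i. By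
  Cauchy-Schwarz and \<parallel>x W\<parallel> \<le> \<sigma>(W) \<parallel>x\<parallel>, each e_l is at most exp \<alpha> and each control value row
  V_l has norm at most \<sigma>_v M_u, so \<parallel>A\<parallel> / g_i \<le> k \<gamma>_i, contradicting the hypothesis.

  Since \<sigma>(W) is defined through the eigenvalues of W^T W, the bound \<parallel>x W\<parallel> \<le> \<sigma>(W) \<parallel>x\<parallel> is
  obtained from a maximiser of \<parallel>W v\<parallel> on the unit sphere, which is an eigenvector of W^T W
  with eigenvalue max \<parallel>W v\<parallel>^2.\<close>

definition sqnorm :: "nat \<Rightarrow> (nat \<Rightarrow> real) \<Rightarrow> real" where
  "sqnorm n v = (\<Sum>j<n. (v j)\<^sup>2)"

definition mat_vec :: "nat \<Rightarrow> rmat \<Rightarrow> (nat \<Rightarrow> real) \<Rightarrow> nat \<Rightarrow> real" where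
  "mat_vec c W v = (\<lambda>t. \<Sum>j<c. W t j * v j)"

definition gram_eigenvalues :: "nat \<Rightarrow> nat \<Rightarrow> rmat \<Rightarrow> real set" where
  "gram_eigenvalues r c W = {ev. \<exists>v::nat \<Rightarrow> real. (\<exists>j<c. v j \<noteq> 0) \<and>
      (\<forall>j<c. (\<Sum>l<c. matmul r (mtrans W) W j l * v l) = ev * v j)}"

definition unit_sphere_on :: "nat \<Rightarrow> (nat \<Rightarrow> real) set" where
  "unit_sphere_on c = {v. sqnorm c v = 1 \<and> (\<forall>j\<ge>c. v j = 0)}"

lemma sigma_max_eq_sqrt_Max: "sigma_max r c W = sqrt (Max (gram_eigenvalues r c W))"
  unfolding sigma_max_def gram_eigenvalues_def ..

lemma sqnorm_nonneg: "sqnorm n v \<ge> 0"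
  unfolding sqnorm_def by (simp add: sum_nonneg)

lemma sqnorm_eq_0_iff: "sqnorm n v = 0 \<longleftrightarrow> (\<forall>j<n. v j = 0)"
  unfolding sqnorm_def by (auto simp: sum_nonneg_eq_0_iff)

lemma vnorm_eq_sqrt_sqnorm: "vnorm n v = sqrt (sqnorm n v)"
  unfolding vnorm_def sqnorm_def ..

lemma vnorm_eq_L2_set: "vnorm n v = L2_set v {..<n}"
  unfolding vnorm_def L2_set_def by simp

lemma vnorm_nonneg: "vnorm n v \<ge> 0"
  unfolding vnorm_eq_sqrt_sqnorm using sqnorm_nonneg by simp

section \<open>The largest singular value as an operator norm\<close>

lemma finite_eigenvalues_rmat:
  fixes G :: rmat
  shows "finite {ev. \<exists>v::nat \<Rightarrow> real. (\<exists>j<c. v j \<noteq> 0) \<and>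
      (\<forall>j<c. (\<Sum>l<c. G j l * v l) = ev * v j)}" (is "finite ?E")
proof -
  define A where "A = Matrix.mat c c (\<lambda>(j, l). G j l)"
  have A: "A \<in> carrier_mat c c" unfolding A_def by simp
  have "?E \<subseteq> {x. poly (char_poly A) x = 0}"
  proof
    fix ev assume "ev \<in> ?E"
    then obtain v j0 where j0: "j0 < c" "v j0 \<noteq> 0"
      and ev: "\<forall>j<c. (\<Sum>l<c. G j l * v l) = ev * v j" by auto
    define w where "w = Matrix.vec c v"
    have "A *\<^sub>v w = ev \<cdot>\<^sub>v w"
    proof (rule eq_vecI)
      fix j assume "j < dim_vec (ev \<cdot>\<^sub>v w)"
      then have j: "j < c" by (simp add: w_def)
      have "(A *\<^sub>v w) $ j = (\<Sum>l<c. G j l * v l)"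
        using j by (simp add: A_def w_def row_def scalar_prod_def atLeast0LessThan)
      then show "(A *\<^sub>v w) $ j = (ev \<cdot>\<^sub>v w) $ j" using ev j by (simp add: w_def)
    qed (simp_all add: A_def w_def)
    moreover have "w \<noteq> 0\<^sub>v c"
    proof
      assume "w = 0\<^sub>v c"
      then have "w $ j0 = 0" using j0 by simp
      with j0 show False by (simp add: w_def)
    qed
    ultimately have "eigenvector A w ev"
      using A unfolding eigenvector_def by (simp add: w_def)
    then have "eigenvalue A ev" unfolding eigenvalue_def by blast
    then show "ev \<in> {x. poly (char_poly A) x = 0}"
      using eigenvalue_root_char_poly[OF A] by simp
  qed
  moreover have "char_poly A \<noteq> 0" using degree_monic_char_poly[OF A] by auto
  ultimately show ?thesis using poly_roots_finite finite_subset by blast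
qed

lemma finite_gram_eigenvalues: "finite (gram_eigenvalues r c W)"
  unfolding gram_eigenvalues_def by (rule finite_eigenvalues_rmat)

lemma continuous_on_coordinate [continuous_intros]:
  "continuous_on S (\<lambda>x::nat \<Rightarrow> real. x i)"
  by (rule continuous_on_subset[OF continuous_on_product_coordinates]) simp

text \<open>Functions \<open>nat \<Rightarrow> real\<close> carry the product topology, so the vanishing of
  the coordinates \<open>j \<ge> c\<close> is what makes the sphere compact.\<close>

lemma compact_unit_sphere_on: "compact (unit_sphere_on c)"
proof -
  have "compactin (product_topology (\<lambda>_. euclidean) UNIV) (PiE UNIV (\<lambda>_::nat. {-1..1::real}))"
    by (subst compactin_PiE) auto
  then have box: "compact (PiE UNIV (\<lambda>_::nat. {-1..1::real}))"
    by (simp add: euclidean_product_topology)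
  have "unit_sphere_on c = {v. sqnorm c v = 1} \<inter> (\<Inter>j\<in>{c..}. {v. v j = 0})"
    by (auto simp: unit_sphere_on_def)
  moreover have "closed {v::nat \<Rightarrow> real. sqnorm c v = 1}"
    unfolding sqnorm_def by (intro closed_Collect_eq continuous_intros)
  moreover have "closed {v::nat \<Rightarrow> real. v j = 0}" for j
    by (intro closed_Collect_eq continuous_intros)
  ultimately have closed: "closed (unit_sphere_on c)" by (metis closed_INT closed_Int)
  have "\<bar>v j\<bar> \<le> 1" if "v \<in> unit_sphere_on c" for v j
  proof (cases "j < c")
    case True
    have "(v j)\<^sup>2 \<le> sqnorm c v"
      unfolding sqnorm_def using True by (intro member_le_sum) auto
    then show ?thesis using that by (simp add: unit_sphere_on_def abs_square_le_1)
  qed (use that in \<open>simp add: unit_sphere_on_def\<close>)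
  then have "unit_sphere_on c = PiE UNIV (\<lambda>_. {-1..1}) \<inter> unit_sphere_on c"
    by (auto simp: abs_le_iff)
  then show ?thesis using compact_Int_closed[OF box closed] by simp
qed

lemma unit_sphere_on_nonempty:
  assumes "c > 0"
  shows "unit_sphere_on c \<noteq> {}"
proof -
  have "sqnorm c (\<lambda>l. if l = 0 then 1 else 0) = (\<Sum>l<c. if l = 0 then 1 else 0)"
    unfolding sqnorm_def by (rule sum.cong) auto
  also have "\<dots> = 1" using assms by simp
  finally have "sqnorm c (\<lambda>l. if l = 0 then 1 else 0) = 1" .
  then show ?thesis using assms unfolding unit_sphere_on_def by force
qed

lemma sqnorm_mat_vec_attains_max:
  assumes "c > 0"
  obtains v where "v \<in> unit_sphere_on c"
    and "\<And>u. u \<in> unit_sphere_on c \<Longrightarrow> sqnorm r (mat_vec c W u) \<le> sqnorm r (mat_vec c W v)"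
proof -
  have "continuous_on (unit_sphere_on c) (\<lambda>u. sqnorm r (mat_vec c W u))"
    unfolding sqnorm_def mat_vec_def by (intro continuous_intros)
  from continuous_attains_sup[OF compact_unit_sphere_on unit_sphere_on_nonempty[OF assms] this]
  show ?thesis using that by blast
qed

lemma sqnorm_mat_vec_le_max:
  assumes v: "v \<in> unit_sphere_on c"
    and max: "\<And>u. u \<in> unit_sphere_on c \<Longrightarrow> sqnorm r (mat_vec c W u) \<le> sqnorm r (mat_vec c W v)"
  shows "sqnorm r (mat_vec c W u) \<le> sqnorm r (mat_vec c W v) * sqnorm c u"
proof (cases "sqnorm c u = 0")
  case True
  then have "mat_vec c W u = (\<lambda>_. 0)" by (simp add: sqnorm_eq_0_iff mat_vec_def)
  then show ?thesis using True by (simp add: sqnorm_def)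
next
  case False
  define s where "s = sqrt (sqnorm c u)"
  have s: "s > 0" "s\<^sup>2 = sqnorm c u"
    using False sqnorm_nonneg[of c u] by (auto simp: s_def)
  define u' where "u' = (\<lambda>j. if j < c then u j / s else 0)"
  have "sqnorm c u' = sqnorm c u / s\<^sup>2"
    unfolding sqnorm_def u'_def by (simp add: power_divide sum_divide_distrib)
  then have u': "u' \<in> unit_sphere_on c"
    using s False by (simp add: unit_sphere_on_def u'_def)
  have "mat_vec c W u' = (\<lambda>t. mat_vec c W u t / s)"
    unfolding mat_vec_def u'_def by (simp add: sum_divide_distrib)
  then have "sqnorm r (mat_vec c W u') = sqnorm r (mat_vec c W u) / s\<^sup>2"
    by (simp add: sqnorm_def power_divide sum_divide_distrib)
  then have "sqnorm r (mat_vec c W u) / sqnorm c u \<le> sqnorm r (mat_vec c W v)"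
    using max[OF u'] s by simp
  moreover have "sqnorm c u > 0" using False sqnorm_nonneg[of c u] by simp
  ultimately show ?thesis by (simp add: pos_divide_le_eq)
qed

lemma linear_coeff_zero_if_quadratic_nonneg:
  fixes B p :: real
  assumes "\<And>x. 0 \<le> x * B + x\<^sup>2 * p"
  shows "B = 0"
proof -
  define q where "q = \<bar>p\<bar> + 1"
  have q: "q > 0" by (simp add: q_def)
  have p: "\<bar>p\<bar> = q - 1" by (simp add: q_def)
  define x where "x = - B / q"
  have "0 \<le> x * B + x\<^sup>2 * p" by (rule assms)
  also have "\<dots> \<le> x * B + x\<^sup>2 * \<bar>p\<bar>" by (simp add: mult_left_mono)
  also have "\<dots> = - (B / q)\<^sup>2"
    unfolding p x_def using q by (simp add: field_simps power2_eq_square)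
  finally show "B = 0" using q by simp
qed

lemma mat_vec_add_unit:
  assumes "j < c"
  shows "mat_vec c W (\<lambda>l. v l + (if l = j then s else 0)) t = mat_vec c W v t + s * W t j"
proof -
  have "mat_vec c W (\<lambda>l. v l + (if l = j then s else 0)) t
      = (\<Sum>l<c. W t l * v l) + (\<Sum>l<c. if l = j then W t l * s else 0)"
    unfolding mat_vec_def sum.distrib[symmetric] by (rule sum.cong) (auto simp: algebra_simps)
  then show ?thesis using assms by (simp add: mat_vec_def)
qed

lemma sqnorm_add_unit:
  assumes "j < c"
  shows "sqnorm c (\<lambda>l. v l + (if l = j then s else 0)) = sqnorm c v + 2 * s * v j + s\<^sup>2"
proof -
  have "sqnorm c (\<lambda>l. v l + (if l = j then s else 0))
      = (\<Sum>l<c. (v l)\<^sup>2 + (if l = j then 2 * s * v l + s\<^sup>2 else 0))"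
    unfolding sqnorm_def by (rule sum.cong) (auto simp: power2_eq_square algebra_simps)
  then show ?thesis using assms by (simp add: sqnorm_def sum.distrib sum.delta)
qed

text \<open>Perturbing the maximiser along the j-th coordinate, the linear term of the
  resulting quadratic inequality must vanish.\<close>

lemma max_sqnorm_mat_vec_gram_eigenvector:
  assumes v: "v \<in> unit_sphere_on c"
    and max: "\<And>u. u \<in> unit_sphere_on c \<Longrightarrow> sqnorm r (mat_vec c W u) \<le> sqnorm r (mat_vec c W v)"
    and j: "j < c"
  shows "(\<Sum>l<c. matmul r (mtrans W) W j l * v l) = sqnorm r (mat_vec c W v) * v j"
proof -
  define mu where "mu = sqnorm r (mat_vec c W v)"
  define a where "a = (\<Sum>t<r. mat_vec c W v t * W t j)"
  define b where "b = (\<Sum>t<r. (W t j)\<^sup>2)"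
  have "0 \<le> s * (2 * (mu * v j - a)) + s\<^sup>2 * (mu - b)" for s
  proof -
    let ?v' = "\<lambda>l. v l + (if l = j then s else 0)"
    have "sqnorm r (mat_vec c W ?v') \<le> mu * sqnorm c ?v'"
      unfolding mu_def by (rule sqnorm_mat_vec_le_max[OF v max])
    moreover have "sqnorm r (mat_vec c W ?v') = mu + 2 * s * a + s\<^sup>2 * b"
      unfolding sqnorm_def mat_vec_add_unit[OF j] mu_def a_def b_def
      by (simp add: power2_eq_square algebra_simps sum.distrib sum_distrib_left)
    moreover have "sqnorm c ?v' = 1 + 2 * s * v j + s\<^sup>2"
      using v sqnorm_add_unit[OF j] by (simp add: unit_sphere_on_def)
    ultimately show ?thesis by (simp add: algebra_simps)
  qed
  then have "mu * v j = a"
    using linear_coeff_zero_if_quadratic_nonneg by fastforce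
  moreover have "a = (\<Sum>l<c. matmul r (mtrans W) W j l * v l)"
  proof -
    have "a = (\<Sum>t<r. \<Sum>l<c. W t j * W t l * v l)"
      unfolding a_def mat_vec_def by (simp add: sum_distrib_right sum_distrib_left mult_ac)
    also have "\<dots> = (\<Sum>l<c. matmul r (mtrans W) W j l * v l)"
      unfolding matmul_def mtrans_def by (subst sum.swap) (simp add: sum_distrib_right)
    finally show ?thesis .
  qed
  ultimately show ?thesis unfolding mu_def by simp
qed

lemma sqnorm_mat_vec_bound_by_gram_eigenvalue:
  assumes "c > 0"
  obtains mu where "0 \<le> mu" "mu \<le> Max (gram_eigenvalues r c W)"
    and "\<And>u. sqnorm r (mat_vec c W u) \<le> mu * sqnorm c u"
proof -
  obtain v where v: "v \<in> unit_sphere_on c"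
    and max: "\<And>u. u \<in> unit_sphere_on c \<Longrightarrow> sqnorm r (mat_vec c W u) \<le> sqnorm r (mat_vec c W v)"
    using sqnorm_mat_vec_attains_max[OF assms] by blast
  have "\<exists>j<c. v j \<noteq> 0" using v sqnorm_eq_0_iff[of c v] by (auto simp: unit_sphere_on_def)
  then have "sqnorm r (mat_vec c W v) \<in> gram_eigenvalues r c W"
    unfolding gram_eigenvalues_def
    using max_sqnorm_mat_vec_gram_eigenvector[OF v max] by blast
  then have "sqnorm r (mat_vec c W v) \<le> Max (gram_eigenvalues r c W)"
    using finite_gram_eigenvalues by (rule Max_ge[rotated])
  then show ?thesis
    using sqnorm_mat_vec_le_max[OF v max] by (rule that[OF sqnorm_nonneg])
qed

text \<open>The bound for \<open>W\<close> transfers to \<open>W\<^sup>T\<close>: with \<open>y = x W\<close>, Cauchy-Schwarz gives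
  \<open>\<parallel>y\<parallel>\<^sup>4 = \<langle>x, W y\<rangle>\<^sup>2 \<le> \<parallel>x\<parallel>\<^sup>2 \<mu> \<parallel>y\<parallel>\<^sup>2\<close>.\<close>

lemma sqnorm_vec_mat_le:
  assumes bound: "\<And>u. sqnorm r (mat_vec c W u) \<le> mu * sqnorm c u" and mu: "mu \<ge> 0"
  shows "sqnorm c (\<lambda>j. \<Sum>l<r. x l * W l j) \<le> mu * sqnorm r x"
proof -
  define y where "y = (\<lambda>j. \<Sum>l<r. x l * W l j)"
  have "sqnorm c y = (\<Sum>j<c. \<Sum>l<r. x l * (W l j * y j))"
    unfolding sqnorm_def y_def by (simp add: power2_eq_square sum_distrib_left mult_ac)
  also have "\<dots> = (\<Sum>l<r. x l * mat_vec c W y l)"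
    unfolding mat_vec_def by (subst sum.swap) (simp add: sum_distrib_left)
  finally have "(sqnorm c y)\<^sup>2 \<le> sqnorm r x * sqnorm r (mat_vec c W y)"
    unfolding sqnorm_def by (simp add: Cauchy_Schwarz_ineq_sum)
  also have "\<dots> \<le> sqnorm r x * (mu * sqnorm c y)"
    using bound sqnorm_nonneg by (simp add: mult_left_mono)
  finally have "sqnorm c y * sqnorm c y \<le> (mu * sqnorm r x) * sqnorm c y"
    by (simp add: power2_eq_square mult_ac)
  then have "sqnorm c y \<le> mu * sqnorm r x"
    using sqnorm_nonneg[of c y] sqnorm_nonneg[of r x] mu
    by (cases "sqnorm c y = 0") (auto intro: mult_right_le_imp_le)
  then show ?thesis unfolding y_def .
qed

lemma sigma_max_nonneg:
  assumes "c > 0"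
  shows "sigma_max r c W \<ge> 0"
proof -
  obtain mu where "0 \<le> mu" "mu \<le> Max (gram_eigenvalues r c W)"
    and "\<And>u. sqnorm r (mat_vec c W u) \<le> mu * sqnorm c u"
    using sqnorm_mat_vec_bound_by_gram_eigenvalue[OF assms, where r = r and W = W] by metis
  then have "0 \<le> Max (gram_eigenvalues r c W)" by linarith
  then show ?thesis by (simp add: sigma_max_eq_sqrt_Max)
qed

lemma vnorm_row_matmul_le:
  assumes "c > 0"
  shows "vnorm c (matmul r X W a) \<le> sigma_max r c W * rownorm r X a"
proof -
  obtain mu where mu: "0 \<le> mu" "mu \<le> Max (gram_eigenvalues r c W)"
    and bound: "\<And>u. sqnorm r (mat_vec c W u) \<le> mu * sqnorm c u"
    using sqnorm_mat_vec_bound_by_gram_eigenvalue[OF assms, where r = r and W = W] by metis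
  have "sqnorm c (matmul r X W a) \<le> mu * sqnorm r (X a)"
    unfolding matmul_def by (rule sqnorm_vec_mat_le[OF bound mu(1)])
  also have "\<dots> \<le> (sigma_max r c W)\<^sup>2 * sqnorm r (X a)"
    using mu by (simp add: sigma_max_eq_sqrt_Max mult_right_mono sqnorm_nonneg)
  finally have "sqrt (sqnorm c (matmul r X W a)) \<le> sqrt ((sigma_max r c W)\<^sup>2) * sqrt (sqnorm r (X a))"
    by (metis real_sqrt_le_mono real_sqrt_mult)
  then show ?thesis
    using sigma_max_nonneg[OF assms] by (simp add: vnorm_eq_sqrt_sqnorm rownorm_def sqnorm_def)
qed

lemma vnorm_row_matmul_le_of_rownorm_le:
  assumes "c > 0" "rownorm r X a \<le> M"
  shows "vnorm c (matmul r X W a) \<le> sigma_max r c W * M"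
  using vnorm_row_matmul_le[OF assms(1), of r X W a]
    mult_left_mono[OF assms(2) sigma_max_nonneg[OF assms(1)]]
  by (rule order_trans)

lemma vnorm_sum_le:
  fixes K :: nat
  shows "vnorm n (\<lambda>b. \<Sum>l<K. f l b) \<le> (\<Sum>l<K. vnorm n (f l))"
proof (induction K)
  case 0
  then show ?case by (simp add: vnorm_def)
next
  case (Suc K)
  have "vnorm n (\<lambda>b. \<Sum>l<Suc K. f l b) \<le> vnorm n (\<lambda>b. \<Sum>l<K. f l b) + vnorm n (f K)"
    unfolding vnorm_eq_L2_set by (simp add: L2_set_triangle_ineq)
  then show ?case using Suc by simp
qed

lemma vnorm_scale: "0 \<le> a \<Longrightarrow> vnorm n (\<lambda>b. a * f b) = a * vnorm n f"
  unfolding vnorm_eq_L2_set by (simp add: L2_set_right_distrib)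

lemma vnorm_weighted_sum_le:
  assumes "\<And>l. l < K \<Longrightarrow> 0 \<le> w l \<and> w l \<le> a" and "\<And>l. l < K \<Longrightarrow> vnorm n (f l) \<le> B"
  shows "vnorm n (\<lambda>b. \<Sum>l<K. w l * f l b) \<le> real K * (a * B)"
proof -
  have "vnorm n (\<lambda>b. \<Sum>l<K. w l * f l b) \<le> (\<Sum>l<K. w l * vnorm n (f l))"
    using vnorm_sum_le[of n "\<lambda>l b. w l * f l b" K] assms(1) by (simp add: vnorm_scale)
  also have "\<dots> \<le> (\<Sum>l<K. a * B)"
  proof (rule sum_mono)
    fix l assume "l \<in> {..<K}"
    with assms show "w l * vnorm n (f l) \<le> a * B"
      by (meson lessThan_iff mult_mono order_trans vnorm_nonneg)
  qed
  finally show ?thesis by simp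
qed

lemma abs_sum_mult_le_vnorm: "\<bar>\<Sum>s<n. f s * g s\<bar> \<le> vnorm n f * vnorm n g"
proof -
  have "\<bar>\<Sum>s<n. f s * g s\<bar> \<le> (\<Sum>s<n. \<bar>f s\<bar> * \<bar>g s\<bar>)"
    by (rule order_trans[OF sum_abs]) (simp add: abs_mult)
  also have "\<dots> \<le> vnorm n f * vnorm n g"
    unfolding vnorm_eq_L2_set by (rule L2_set_mult_ineq)
  finally show ?thesis .
qed

text \<open>The component of \<open>a y - z\<close> orthogonal to \<open>y\<close> is that of \<open>-z\<close>.\<close>

lemma vnorm_proj_perp_row_le:
  assumes Y: "\<And>b. b < n \<Longrightarrow> Y i b = a * Ys i b - z b"
  shows "vnorm n (proj_perp_row n Y Ys i) \<le> vnorm n z"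
proof -
  define yy where "yy = sqnorm n (Ys i)"
  define zy where "zy = (\<Sum>j<n. z j * Ys i j)"
  show ?thesis
  proof (cases "yy = 0")
    case True
    then have "Ys i b = 0" if "b < n" for b
      using that by (simp add: yy_def sqnorm_eq_0_iff)
    then have "sqnorm n (proj_perp_row n Y Ys i) = sqnorm n z"
      using True Y unfolding proj_perp_row_def Let_def sqnorm_def yy_def by simp
    then show ?thesis by (simp add: vnorm_eq_sqrt_sqnorm)
  next
    case False
    then have yy: "yy > 0" using sqnorm_nonneg[of n "Ys i"] by (simp add: yy_def)
    have "(\<Sum>j<n. Y i j * Ys i j) = (\<Sum>j<n. a * (Ys i j)\<^sup>2 - z j * Ys i j)"
      by (intro sum.cong refl) (simp add: Y power2_eq_square algebra_simps)
    then have vy: "(\<Sum>j<n. Y i j * Ys i j) = a * yy - zy"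
      by (simp add: yy_def zy_def sqnorm_def sum_subtractf sum_distrib_left)
    define kk where "kk = zy / yy"
    have proj: "proj_perp_row n Y Ys i b = kk * Ys i b - z b" if "b < n" for b
      using False yy
      unfolding proj_perp_row_def Let_def vy yy_def[symmetric] sqnorm_def[symmetric] Y[OF that] kk_def
      by (simp add: field_simps)
    have "sqnorm n (proj_perp_row n Y Ys i) = sqnorm n (\<lambda>b. kk * Ys i b - z b)"
      unfolding sqnorm_def by (intro sum.cong refl) (simp add: proj)
    also have "\<dots> = kk\<^sup>2 * yy - 2 * kk * zy + sqnorm n z"
      unfolding sqnorm_def yy_def zy_def
      by (simp add: power2_eq_square algebra_simps sum.distrib sum_subtractf sum_distrib_left)
    also have "\<dots> = sqnorm n z - zy\<^sup>2 / yy"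
      using yy by (simp add: kk_def field_simps power2_eq_square)
    also have "\<dots> \<le> sqnorm n z" using yy by simp
    finally show ?thesis by (simp add: vnorm_eq_sqrt_sqnorm)
  qed
qed

section \<open>Attention on a concatenated input\<close>

lemma matmul_vconcat:
  "matmul n (vconcat k U X0) W r = (if r < k then matmul n U W r else matmul n X0 W (r - k))"
  by (auto simp: matmul_def vconcat_def fun_eq_iff)

lemma attn_scores_eq_sum:
  "attn_scores din dkey Wq Wkey X a b
     = (\<Sum>s<dkey. matmul din X Wq a s * matmul din X Wkey b s) / sqrt (real dkey)"
  by (simp only: attn_scores_def matmul_def[of dkey] mtrans_def)

lemma sum_lessThan_add:
  fixes k m :: nat
  shows "(\<Sum>l<k + m. f l) = (\<Sum>l<k. f l) + (\<Sum>j<m. f (k + j))"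
  by (induction m) (simp_all add: add.assoc)

lemma self_attention_vconcat_row:
  fixes din dkey k m i :: nat and Wq Wkey Wv U X0 :: rmat
  defines "e \<equiv> \<lambda>l. exp (attn_scores din dkey Wq Wkey (vconcat k U X0) (k + i) l)"
    and "g \<equiv> \<Sum>j<m. exp (attn_scores din dkey Wq Wkey X0 i j)"
  assumes "m > 0"
  shows "self_attention (k + m) din dkey Wq Wkey Wv (vconcat k U X0) (k + i) b
    = ((\<Sum>l<k. e l * matmul din U Wv l b) + g * self_attention m din dkey Wq Wkey Wv X0 i b)
      / ((\<Sum>l<k. e l) + g)"
proof -
  have score: "attn_scores din dkey Wq Wkey (vconcat k U X0) (k + i) (k + j)
      = attn_scores din dkey Wq Wkey X0 i j" for j
    unfolding attn_scores_eq_sum matmul_vconcat by simp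
  have "g > 0" unfolding g_def using assms by (intro sum_pos) auto
  then show ?thesis
    unfolding self_attention_def sum_lessThan_add e_def g_def
    by (simp add: score matmul_vconcat)
qed

lemma attn_scores_vconcat_control_le:
  assumes "dkey > 0" "l < k" "rownorm din U l \<le> Mu" "rownorm din X0 i \<le> Mx"
  shows "attn_scores din dkey Wq Wkey (vconcat k U X0) (k + i) l
    \<le> sigma_max din dkey Wq * sigma_max din dkey Wkey * Mu * Mx / sqrt (real dkey)"
proof -
  let ?q = "matmul din X0 Wq i" and ?key = "matmul din U Wkey l"
  have "\<bar>\<Sum>s<dkey. ?q s * ?key s\<bar> \<le> vnorm dkey ?q * vnorm dkey ?key"
    by (rule abs_sum_mult_le_vnorm)
  also have "\<dots> \<le> (sigma_max din dkey Wq * Mx) * (sigma_max din dkey Wkey * Mu)"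
  proof (rule mult_mono)
    have "rownorm din X0 i \<ge> 0" by (simp add: rownorm_def sum_nonneg)
    then show "0 \<le> sigma_max din dkey Wq * Mx"
      using assms(4) sigma_max_nonneg[OF assms(1)] by simp
  qed (use assms in \<open>simp_all add: vnorm_row_matmul_le_of_rownorm_le vnorm_nonneg\<close>)
  finally show ?thesis
    using assms(1,2) unfolding attn_scores_eq_sum matmul_vconcat
    by (simp add: divide_right_mono mult_ac abs_le_iff)
qed

theorem theorem1:
  fixes din dout dkey k m :: nat
    and Wq Wkey Wv X0 Ystar U :: rmat
    and Mu :: real and i :: nat
  assumes "din > 0" "dout > 0" "dkey > 0" "k > 0" "m > 0"
    and "Mu > 0"
    and "i < m"
    and "vnorm dout (proj_perp_row dout (self_attention m din dkey Wq Wkey Wv X0) Ystar i)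
         > real k *
           (exp (sigma_max din dkey Wq * sigma_max din dkey Wkey * Mu
                   * Max {rownorm din X0 j | j. j < m} / sqrt (real dkey))
            / (\<Sum>j<m. exp (attn_scores din dkey Wq Wkey X0 i j))
            * sigma_max din dout Wv * Mu)"
    and "\<forall>j<k. rownorm din U j \<le> Mu"
  shows "\<exists>a<m. \<exists>b<dout.
           self_attention (k + m) din dkey Wq Wkey Wv (vconcat k U X0) (k + a) b \<noteq> Ystar a b"
proof (rule ccontr)
  assume "\<not> ?thesis"
  then have reached: "Ystar i b = self_attention (k + m) din dkey Wq Wkey Wv (vconcat k U X0) (k + i) b"
    if "b < dout" for b using that assms(7) by auto
  define Ymax where "Ymax = self_attention m din dkey Wq Wkey Wv X0"
  define Mx where "Mx = Max {rownorm din X0 j | j. j < m}"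
  define alpha where "alpha = sigma_max din dkey Wq * sigma_max din dkey Wkey * Mu * Mx / sqrt (real dkey)"
  define e where "e = (\<lambda>l. exp (attn_scores din dkey Wq Wkey (vconcat k U X0) (k + i) l))"
  define g where "g = (\<Sum>j<m. exp (attn_scores din dkey Wq Wkey X0 i j))"
  define S where "S = (\<Sum>l<k. e l)"
  define A where "A = (\<lambda>b. \<Sum>l<k. e l * matmul din U Wv l b)"
  have g: "g > 0" unfolding g_def using assms(5) by (intro sum_pos) auto
  have S: "S \<ge> 0" unfolding S_def e_def by (simp add: sum_nonneg)
  have "Ystar i b = (A b + g * Ymax i b) / (S + g)" if "b < dout" for b
    unfolding reached[OF that] self_attention_vconcat_row[OF assms(5)] A_def g_def S_def e_def Ymax_def
    by (rule refl)
  then have "Ymax i b = (S + g) / g * Ystar i b - 1 / g * A b" if "b < dout" for b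
    using that g S by (simp add: field_simps)
  then have "vnorm dout (proj_perp_row dout Ymax Ystar i) \<le> vnorm dout (\<lambda>b. 1 / g * A b)"
    by (rule vnorm_proj_perp_row_le)
  also have "\<dots> = vnorm dout A / g" using g vnorm_scale[of "1 / g" dout A] by simp
  also have "vnorm dout A \<le> real k * (exp alpha * (sigma_max din dout Wv * Mu))"
    unfolding A_def
  proof (rule vnorm_weighted_sum_le)
    have "rownorm din X0 i \<le> Mx"
      unfolding Mx_def using assms(7) by (intro Max_ge) auto
    then show "0 \<le> e l \<and> e l \<le> exp alpha" if "l < k" for l
      using attn_scores_vconcat_control_le[OF assms(3) that] assms(9) that
      unfolding e_def alpha_def by simp
    show "vnorm dout (matmul din U Wv l) \<le> sigma_max din dout Wv * Mu" if "l < k" for l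
      using that assms(2,9) by (simp add: vnorm_row_matmul_le_of_rownorm_le)
  qed
  then have "vnorm dout A / g \<le> real k * (exp alpha / g * sigma_max din dout Wv * Mu)"
    using g by (simp add: divide_right_mono)
  finally show False
    using assms(8) unfolding Ymax_def alpha_def Mx_def g_def by simp
qed

end
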